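(* Let $-\infty\le a<b\le+\infty$, $I=(a,b)$, and let $f$ be an increasing continuous set-function on $I$ which has the Radon-Nikodym property (with function $s$) and is dominated. Fix an open interval $J\subseteq I$. For every $n\in\mathbb N$ let $\{I_j^n\}_{j=1}^n$ be an optimal partition for $\min_{\{I_j\}\in \mathcal C_n(I)}\max_{1\le j\le n} f(I_j)$, let $k_n\ge1$ be the number of intervals of $\{I_j^n\}$ having nonempty intersection with $J$, and let $I_{j_1}^n,\dots,I_{j_{k_n}}^n$ be these intervals. Then \[ \liminf_{n\to\infty} k_n\max_{1\le i\le k_n} f(I_{j_i}^n)\ge\int_J s(x)\,dx. \] Moreover, when $J=I$ (so $k_n=n$), \[ \lim_{n\to\infty} n\max_{1\le j\le n} f(I_j^n)=\int_I s(x)\,dx. \]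
   Context: All intervals are open; $\mathcal L$ is Lebesgue measure. $\mathcal C_n(I)$ is the class of partitions $\{I_j\}_{j=1}^n$ of $I$ with $I_j=(x_{j-1},x_j)$, $x_0:=a$, $x_n:=b$, $x_{j-1}\le x_j$ (some $I_j$ may be empty). A set-function is a function on the open subintervals of $I$ with values in $[0,+\infty]$; continuous if $(x,y)\mapsto f((x,y))$ ($x\le y$ in $\overline I$) is continuous; increasing if $f(I_1)\le f(I_2)$ for intervals $I_1\subseteq I_2$. Radon-Nikodym property (increasing case): there is $s\in L^1(I)$, $s>0$ a.e., with $\lim_{J\downarrow x} f(J)/\mathcal L(J)=s(x)$ for a.e. $x\in I$, the limit taken along bounded open intervals containing $x$ shrinking to $x$. Dominated (increasing case): there is $d\in L^1(I)$ with $\sum_{j=1}^n \frac{f(I_j)}{\mathcal L(I_j)}\chi_{I_j}(x)\le d(x)$ for all $n$, all $\{I_j\}\in\mathcal C_n(I)$, and a.e. $x\in I$, the ratio taken to be $0$ when not well-defined. *)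

theory Defs
  imports "HOL-Analysis.Analysis"
begin

definition oi :: "ereal \<Rightarrow> ereal \<Rightarrow> real set" where
  "oi x y = {r. x < ereal r \<and> ereal r < y}"

text \<open>Set-functions are modelled as maps from sets of reals to [0,+\<infinity>];
  only their values on open subintervals of I = oi a b matter.\<close>

definition continuous_sf :: "ereal \<Rightarrow> ereal \<Rightarrow> (real set \<Rightarrow> ennreal) \<Rightarrow> bool" where
  "continuous_sf a b f \<longleftrightarrow>
     continuous_on {(x, y). a \<le> x \<and> x \<le> y \<and> y \<le> b} (\<lambda>(x, y). f (oi x y))"

definition increasing_sf :: "ereal \<Rightarrow> ereal \<Rightarrow> (real set \<Rightarrow> ennreal) \<Rightarrow> bool" where
  "increasing_sf a b f \<longleftrightarrow>
     (\<forall>x1 y1 x2 y2. a \<le> x1 \<and> x1 \<le> y1 \<and> y1 \<le> b \<and> a \<le> x2 \<and> x2 \<le> y2 \<and> y2 \<le> b \<and>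
        oi x1 y1 \<subseteq> oi x2 y2 \<longrightarrow> f (oi x1 y1) \<le> f (oi x2 y2))"

definition RN_sf :: "ereal \<Rightarrow> ereal \<Rightarrow> (real set \<Rightarrow> ennreal) \<Rightarrow> (real \<Rightarrow> real) \<Rightarrow> bool" where
  "RN_sf a b f s \<longleftrightarrow>
     set_integrable lborel (oi a b) s \<and>
     (AE x in lborel. x \<in> oi a b \<longrightarrow> s x > 0) \<and>
     (AE x in lborel. x \<in> oi a b \<longrightarrow>
        (\<forall>eps>0. \<exists>del>0. \<forall>u v. a < ereal u \<and> ereal v < b \<and> u < x \<and> x < v \<and> v - u < del \<longrightarrow>
            f (oi (ereal u) (ereal v)) \<noteq> top \<and>
            abs (enn2real (f (oi (ereal u) (ereal v))) / (v - u) - s x) < eps))"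

text \<open>Partitions in C_n(I): points x_0 = a \<le> x_1 \<le> ... \<le> x_n = b; the j-th interval
  (1 \<le> j \<le> n) is oi (x (j-1)) (x j).\<close>
definition partition_n :: "nat \<Rightarrow> ereal \<Rightarrow> ereal \<Rightarrow> (nat \<Rightarrow> ereal) \<Rightarrow> bool" where
  "partition_n n a b xs \<longleftrightarrow> xs 0 = a \<and> xs n = b \<and> (\<forall>j<n. xs j \<le> xs (Suc j))"

definition part_iv :: "(nat \<Rightarrow> ereal) \<Rightarrow> nat \<Rightarrow> real set" where
  "part_iv xs j = oi (xs (j - 1)) (xs j)"

text \<open>Ratio f(J)/L(J), taken to be 0 when not well-defined (L(J) = 0 or L(J) = \<infinity>).\<close>
definition sf_ratio :: "(real set \<Rightarrow> ennreal) \<Rightarrow> real set \<Rightarrow> ennreal" where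
  "sf_ratio f J = (if 0 < emeasure lborel J \<and> emeasure lborel J < top
                   then f J / emeasure lborel J else 0)"

definition dominated_sf :: "ereal \<Rightarrow> ereal \<Rightarrow> (real set \<Rightarrow> ennreal) \<Rightarrow> bool" where
  "dominated_sf a b f \<longleftrightarrow>
     (\<exists>d. set_integrable lborel (oi a b) d \<and>
        (\<forall>n xs. partition_n n a b xs \<longrightarrow>
           (AE x in lborel. x \<in> oi a b \<longrightarrow>
              (\<Sum>j\<in>{1..n}. sf_ratio f (part_iv xs j) * indicator (part_iv xs j) x) \<le> ennreal (d x))))"

definition max_sf :: "(real set \<Rightarrow> ennreal) \<Rightarrow> nat \<Rightarrow> (nat \<Rightarrow> ereal) \<Rightarrow> ennreal" where
  "max_sf f n xs = Max ((\<lambda>j. f (part_iv xs j)) ` {1..n})"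

definition optimal_partition :: "ereal \<Rightarrow> ereal \<Rightarrow> (real set \<Rightarrow> ennreal) \<Rightarrow> nat \<Rightarrow> (nat \<Rightarrow> ereal) \<Rightarrow> bool" where
  "optimal_partition a b f n xs \<longleftrightarrow> partition_n n a b xs \<and>
     (\<forall>ys. partition_n n a b ys \<longrightarrow> max_sf f n xs \<le> max_sf f n ys)"

definition meet_idx :: "nat \<Rightarrow> (nat \<Rightarrow> ereal) \<Rightarrow> real set \<Rightarrow> nat set" where
  "meet_idx n xs J = {j \<in> {1..n}. part_iv xs j \<inter> J \<noteq> {}}"

end

theory Submission
  imports Defs
begin

text \<open>For t > 0, continuity of f yields the greedy partition of I = (a, b) into cells of
  f-value exactly t, except possibly the last. Applied to such a partition, domination bounds the
  number N(t) of cells, and since the step functions \<Sum> f(I_j)/L(I_j) \<chi>_{I_j} converge to s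
  almost everywhere whenever max f(I_j) \<rightarrow> 0 (f is increasing and positive on nondegenerate
  intervals, so the cell containing a fixed point shrinks to it), dominated convergence gives
  limsup t N(t) \<le> \<integral>_I s as t \<rightarrow> 0. Optimality compares the n-partition with the
  greedy one for t slightly above (\<integral>_I s)/n, so limsup n max f(I_j^n) \<le> \<integral>_I s. Conversely,
  Fatou's lemma applied to the step functions of the optimal partitions restricted to J bounds
  \<integral>_J s by k_n max f(I_{j_i}^n) in the limit; for J = I the two bounds meet.\<close>

lemma tendsto_ennreal_approx:
  assumes "\<And>eps. eps > 0 \<Longrightarrow> \<forall>\<^sub>F k in F. X k \<noteq> top \<and> \<bar>enn2real (X k) - l\<bar> < eps"
  shows "(X \<longlongrightarrow> ennreal l) F"
proof -
  have "((\<lambda>k. enn2real (X k)) \<longlongrightarrow> l) F"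
  proof (rule tendstoI)
    fix e :: real
    assume "e > 0"
    from assms[OF this] show "\<forall>\<^sub>F k in F. dist (enn2real (X k)) l < e"
      by eventually_elim (simp add: dist_real_def)
  qed
  then have "((\<lambda>k. ennreal (enn2real (X k))) \<longlongrightarrow> ennreal l) F"
    by (rule tendsto_ennrealI)
  moreover have "\<forall>\<^sub>F k in F. ennreal (enn2real (X k)) = X k"
    using assms[OF zero_less_one] by (auto simp: ennreal_enn2real_if elim: eventually_mono)
  ultimately show ?thesis
    by (rule Lim_transform_eventually)
qed

lemma set_integrable_ennreal_indicator:
  assumes "set_integrable M A (g :: 'a \<Rightarrow> real)"
  shows "(\<lambda>x. ennreal (g x) * indicator A x) \<in> borel_measurable M"
    and "(\<integral>\<^sup>+x. ennreal (g x) * indicator A x \<partial>M) < \<infinity>"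
proof -
  have eq: "(\<lambda>x. ennreal (g x) * indicator A x) = (\<lambda>x. ennreal (indicator A x *\<^sub>R g x))"
    by (auto split: split_indicator)
  have int: "integrable M (\<lambda>x. indicator A x *\<^sub>R g x)"
    using assms unfolding set_integrable_def .
  then show "(\<lambda>x. ennreal (g x) * indicator A x) \<in> borel_measurable M"
    unfolding eq by measurable
  have "(\<integral>\<^sup>+x. ennreal (indicator A x *\<^sub>R g x) \<partial>M) \<le> (\<integral>\<^sup>+x. ennreal (norm (indicator A x *\<^sub>R g x)) \<partial>M)"
    by (intro nn_integral_mono ennreal_leI) auto
  also have "\<dots> < \<infinity>"
    using int unfolding integrable_iff_bounded by auto
  finally show "(\<integral>\<^sup>+x. ennreal (g x) * indicator A x \<partial>M) < \<infinity>"
    unfolding eq .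
qed

lemma Limsup_le_Liminf_imp_tendsto:
  fixes X :: "_ \<Rightarrow> 'a :: {complete_linorder, linorder_topology}"
  assumes "F \<noteq> bot" "l \<le> Liminf F X" "Limsup F X \<le> l"
  shows "(X \<longlongrightarrow> l) F"
  using Liminf_le_Limsup[OF assms(1), of X] assms by (intro Liminf_eq_Limsup) auto

lemma oi_ereal [simp]: "oi (ereal u) (ereal v) = {u<..<v}"
  by (auto simp: oi_def)

lemma open_oi: "open (oi x y)"
proof -
  have "oi x y = {r. x < ereal r} \<inter> {r. ereal r < y}"
    by (auto simp: oi_def)
  moreover have "open {r. x < ereal r}" "open {r. ereal r < y}"
    by (intro open_Collect_less continuous_intros continuous_on_ereal; simp)+
  ultimately show ?thesis
    by auto
qed

lemma oi_in_sets_lborel [measurable]: "oi x y \<in> sets lborel"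
  using open_oi by simp

lemma oi_in_sets_borel [measurable]: "oi x y \<in> sets borel"
  using open_oi by simp

lemma oi_empty: "y \<le> x \<Longrightarrow> oi x y = {}"
  by (auto simp: oi_def)

lemma oi_mono: "x2 \<le> x1 \<Longrightarrow> y1 \<le> y2 \<Longrightarrow> oi x1 y1 \<subseteq> oi x2 y2"
  by (auto simp: oi_def)

lemma eventually_oi_margin:
  assumes "x \<in> oi a b"
  shows "\<forall>\<^sub>F h in at_right 0. a < ereal (x - h) \<and> ereal (x + h) < b"
proof -
  obtain e where e: "e > 0" "ball x e \<subseteq> oi a b"
    using open_oi assms by (meson open_contains_ball)
  have "a < ereal (x - h) \<and> ereal (x + h) < b" if "0 < h" "h < e" for h
    using e(2) that by (auto simp: oi_def dist_real_def subset_eq)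
  then show ?thesis
    using e(1) by (auto simp: eventually_at_right_field)
qed

lemma oi_margin:
  assumes "x \<in> oi a b" "r > 0"
  obtains h where "0 < h" "h < r" "a < ereal (x - h)" "ereal (x + h) < b"
proof -
  have "\<forall>\<^sub>F h in at_right 0. h < r"
    using assms(2) unfolding eventually_at_right_field by (intro exI[of _ r]) auto
  with eventually_oi_margin[OF assms(1)] eventually_at_right_less[of 0]
  have "\<forall>\<^sub>F h in at_right 0. 0 < h \<and> h < r \<and> a < ereal (x - h) \<and> ereal (x + h) < b"
    by eventually_elim auto
  then show ?thesis
    using eventually_happens'[OF trivial_limit_at_right_real] that by blast
qed

lemma partition_n_mono:
  assumes "partition_n n a b xs" "i \<le> j" "j \<le> n"
  shows "xs i \<le> xs j"
  by (rule lift_Suc_mono_le_ivl[where N = "{..<n}", OF _ assms(2)])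
    (use assms(1,3) in \<open>auto simp: partition_n_def\<close>)

lemma partition_n_bounds:
  assumes "partition_n n a b xs" "j \<le> n"
  shows "a \<le> xs j" "xs j \<le> b"
  using partition_n_mono[OF assms(1), of 0 j] partition_n_mono[OF assms(1), of j n] assms
  by (auto simp: partition_n_def)

lemma part_iv_subset: "partition_n n a b xs \<Longrightarrow> j \<in> {1..n} \<Longrightarrow> part_iv xs j \<subseteq> oi a b"
  unfolding part_iv_def
  using partition_n_bounds[of n a b xs "j - 1"] partition_n_bounds[of n a b xs j]
  by (intro oi_mono) auto

lemma part_iv_disjoint:
  assumes "partition_n n a b xs" "i \<in> {1..n}" "j \<in> {1..n}" "i \<noteq> j"
  shows "part_iv xs i \<inter> part_iv xs j = {}"
proof -
  have *: "part_iv xs i \<inter> part_iv xs j = {}" if "i < j" "j \<le> n" for i j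
  proof -
    have "xs i \<le> xs (j - 1)"
      using partition_n_mono[OF assms(1), of i "j - 1"] that by simp
    then show ?thesis
      by (auto simp: part_iv_def oi_def)
  qed
  show ?thesis
    using assms(2-4) *[of i j] *[of j i] by (cases "i < j") auto
qed

lemma partition_n_cell:
  assumes P: "partition_n n a b xs" and x: "x \<in> oi a b" and nx: "\<forall>j. xs j \<noteq> ereal x"
  obtains j where "j \<in> {1..n}" "x \<in> part_iv xs j"
proof -
  have ex: "\<exists>j. ereal x < xs j"
    using P x by (auto simp: partition_n_def oi_def)
  define j where "j = (LEAST j. ereal x < xs j)"
  have right: "ereal x < xs j"
    unfolding j_def by (rule LeastI_ex[OF ex])
  have "j \<le> n"
    unfolding j_def using P x by (intro Least_le) (auto simp: partition_n_def oi_def)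
  moreover have "j \<noteq> 0"
    using right P x by (cases "j = 0") (auto simp: partition_n_def oi_def)
  moreover have "\<not> ereal x < xs (j - 1)"
    using \<open>j \<noteq> 0\<close> unfolding j_def by (intro not_less_Least) simp
  then have "xs (j - 1) < ereal x"
    using nx by (metis linorder_neqE)
  ultimately have "j \<in> {1..n}" "x \<in> part_iv xs j"
    using right by (auto simp: part_iv_def oi_def)
  then show ?thesis
    by (rule that)
qed

lemma AE_not_division_point: "AE x in lborel. \<forall>k j. (xs :: nat \<Rightarrow> nat \<Rightarrow> ereal) k j \<noteq> ereal x"
proof -
  have "{r. \<exists>k j. xs k j = ereal r} \<subseteq> (\<lambda>(k, j). real_of_ereal (xs k j)) ` UNIV"
    by (auto simp: image_iff) (metis real_of_ereal.simps(1))
  then have "countable {r. \<exists>k j. xs k j = ereal r}"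
    by (rule countable_subset) auto
  then have "{r. \<exists>k j. xs k j = ereal r} \<in> null_sets lborel"
    by (rule countable_imp_null_set_lborel)
  then show ?thesis
    by (auto dest: AE_not_in)
qed

section \<open>The step function of a partition\<close>

lemma nn_integral_sf_ratio:
  assumes "J \<in> sets lborel"
  shows "(\<integral>\<^sup>+x. sf_ratio f J * indicator J x \<partial>lborel) = sf_ratio f J * emeasure lborel J"
  using assms by (simp add: nn_integral_cmult_indicator)

lemma nn_integral_sf_ratio_le:
  "J \<in> sets lborel \<Longrightarrow> (\<integral>\<^sup>+x. sf_ratio f J * indicator J x \<partial>lborel) \<le> f J"
  by (subst nn_integral_sf_ratio) (auto simp: sf_ratio_def ennreal_divide_times)

lemma nn_integral_sf_ratio_eq:
  "J \<in> sets lborel \<Longrightarrow> 0 < emeasure lborel J \<Longrightarrow> emeasure lborel J < \<infinity> \<Longrightarrow>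
    (\<integral>\<^sup>+x. sf_ratio f J * indicator J x \<partial>lborel) = f J"
  by (subst nn_integral_sf_ratio) (auto simp: sf_ratio_def ennreal_divide_times)

definition ratio_sum :: "(real set \<Rightarrow> ennreal) \<Rightarrow> nat \<Rightarrow> (nat \<Rightarrow> ereal) \<Rightarrow> real \<Rightarrow> ennreal" where
  "ratio_sum f n xs x = (\<Sum>j\<in>{1..n}. sf_ratio f (part_iv xs j) * indicator (part_iv xs j) x)"

lemma ratio_sum_measurable [measurable]: "ratio_sum f n xs \<in> borel_measurable lborel"
  unfolding ratio_sum_def part_iv_def by measurable

lemma ratio_sum_cell:
  assumes "partition_n n a b xs" "j \<in> {1..n}" "x \<in> part_iv xs j"
  shows "ratio_sum f n xs x = sf_ratio f (part_iv xs j)"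
proof -
  have "x \<notin> part_iv xs i" if "i \<in> {1..n}" "i \<noteq> j" for i
    using part_iv_disjoint[OF assms(1) that(1) assms(2) that(2)] assms(3) by auto
  then have "(\<Sum>i\<in>{1..n} - {j}. sf_ratio f (part_iv xs i) * indicator (part_iv xs i) x) = 0"
    by (intro sum.neutral) auto
  then show ?thesis
    unfolding ratio_sum_def using assms(2,3) by (subst sum.remove[of _ j]) auto
qed

lemma ratio_sum_outside:
  "partition_n n a b xs \<Longrightarrow> x \<notin> oi a b \<Longrightarrow> ratio_sum f n xs x = 0"
  unfolding ratio_sum_def using part_iv_subset[of n a b xs]
  by (intro sum.neutral) (fastforce simp: indicator_def)

lemma nn_integral_ratio_sum:
  "(\<integral>\<^sup>+x. ratio_sum f n xs x \<partial>lborel) =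
     (\<Sum>j\<in>{1..n}. \<integral>\<^sup>+x. sf_ratio f (part_iv xs j) * indicator (part_iv xs j) x \<partial>lborel)"
  unfolding ratio_sum_def by (intro nn_integral_sum) (auto simp: part_iv_def)

lemma nn_integral_ratio_sum_on_le:
  assumes J: "J \<in> sets lborel"
  shows "(\<integral>\<^sup>+x. ratio_sum f n xs x * indicator J x \<partial>lborel) \<le>
    of_nat (card (meet_idx n xs J)) * Max ((\<lambda>j. f (part_iv xs j)) ` meet_idx n xs J)"
proof -
  define K where "K = meet_idx n xs J"
  have K: "K \<subseteq> {1..n}"
    by (auto simp: K_def meet_idx_def)
  have pointwise: "ratio_sum f n xs x * indicator J x \<le>
      (\<Sum>j\<in>K. sf_ratio f (part_iv xs j) * indicator (part_iv xs j) x)" for x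
  proof -
    have "ratio_sum f n xs x * indicator J x =
        (\<Sum>j\<in>K. sf_ratio f (part_iv xs j) * indicator (part_iv xs j) x * indicator J x)"
      unfolding ratio_sum_def sum_distrib_right
      by (rule sum.mono_neutral_right[OF _ K])
        (auto simp: K_def meet_idx_def split: split_indicator)
    also have "\<dots> \<le> (\<Sum>j\<in>K. sf_ratio f (part_iv xs j) * indicator (part_iv xs j) x)"
      by (intro sum_mono) (simp split: split_indicator)
    finally show ?thesis .
  qed
  have "(\<integral>\<^sup>+x. ratio_sum f n xs x * indicator J x \<partial>lborel) \<le>
      (\<integral>\<^sup>+x. (\<Sum>j\<in>K. sf_ratio f (part_iv xs j) * indicator (part_iv xs j) x) \<partial>lborel)"
    using pointwise by (rule nn_integral_mono)
  also have "\<dots> = (\<Sum>j\<in>K. \<integral>\<^sup>+x. sf_ratio f (part_iv xs j) * indicator (part_iv xs j) x \<partial>lborel)"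
    by (intro nn_integral_sum) (auto simp: part_iv_def)
  also have "\<dots> \<le> (\<Sum>j\<in>K. Max ((\<lambda>j. f (part_iv xs j)) ` K))"
  proof (rule sum_mono)
    fix j
    assume "j \<in> K"
    have "(\<integral>\<^sup>+x. sf_ratio f (part_iv xs j) * indicator (part_iv xs j) x \<partial>lborel) \<le> f (part_iv xs j)"
      by (rule nn_integral_sf_ratio_le) (simp add: part_iv_def)
    also have "\<dots> \<le> Max ((\<lambda>j. f (part_iv xs j)) ` K)"
      using \<open>j \<in> K\<close> finite_subset[OF K] by (intro Max_ge) auto
    finally show "(\<integral>\<^sup>+x. sf_ratio f (part_iv xs j) * indicator (part_iv xs j) x \<partial>lborel) \<le>
        Max ((\<lambda>j. f (part_iv xs j)) ` K)" .
  qed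
  finally show ?thesis
    by (simp add: K_def)
qed

lemma nn_integral_ratio_sum_ge:
  assumes T: "T \<subseteq> {1..n}"
    and cells: "\<And>j. j \<in> T \<Longrightarrow> \<exists>u v. u < v \<and> part_iv xs j = {u<..<v} \<and> f (part_iv xs j) = ennreal t"
  shows "of_nat (card T) * ennreal t \<le> (\<integral>\<^sup>+x. ratio_sum f n xs x \<partial>lborel)"
proof -
  have "of_nat (card T) * ennreal t =
      (\<Sum>j\<in>T. \<integral>\<^sup>+x. sf_ratio f (part_iv xs j) * indicator (part_iv xs j) x \<partial>lborel)"
  proof (subst sum.cong[OF refl])
    fix j
    assume "j \<in> T"
    then obtain u v where "u < v" "part_iv xs j = {u<..<v}" "f (part_iv xs j) = ennreal t"
      using cells by blast
    then show "(\<integral>\<^sup>+x. sf_ratio f (part_iv xs j) * indicator (part_iv xs j) x \<partial>lborel) = ennreal t"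
      by (subst nn_integral_sf_ratio_eq) auto
  qed simp
  also have "\<dots> \<le> (\<Sum>j\<in>{1..n}. \<integral>\<^sup>+x. sf_ratio f (part_iv xs j) * indicator (part_iv xs j) x \<partial>lborel)"
    using T by (intro sum_mono2) auto
  also have "\<dots> = (\<integral>\<^sup>+x. ratio_sum f n xs x \<partial>lborel)"
    by (rule nn_integral_ratio_sum[symmetric])
  finally show ?thesis .
qed

lemma enn2real_sf_ratio:
  "u < v \<Longrightarrow> enn2real (sf_ratio f {u<..<v}) = enn2real (f {u<..<v}) / (v - u)"
  by (cases "f {u<..<v}") (auto simp: sf_ratio_def divide_ennreal ennreal_top_divide)

lemma sf_ratio_neq_top: "u < v \<Longrightarrow> f {u<..<v} \<noteq> top \<Longrightarrow> sf_ratio f {u<..<v} \<noteq> top"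
  by (auto simp: sf_ratio_def ennreal_divide_eq_top_iff)

lemma part_iv_le_max_sf: "j \<in> {1..n} \<Longrightarrow> f (part_iv xs j) \<le> max_sf f n xs"
  unfolding max_sf_def by (intro Max_ge) auto

lemma max_sf_le:
  "n \<ge> 1 \<Longrightarrow> (\<And>j. j \<in> {1..n} \<Longrightarrow> f (part_iv xs j) \<le> c) \<Longrightarrow> max_sf f n xs \<le> c"
  unfolding max_sf_def by (subst Max_le_iff) auto

lemma card_meet_idx_mult_Max_le:
  "of_nat (card (meet_idx n xs J)) * Max ((\<lambda>j. f (part_iv xs j)) ` meet_idx n xs J) \<le>
    of_nat n * max_sf f n xs"
proof (cases "meet_idx n xs J = {}")
  case False
  have K: "meet_idx n xs J \<subseteq> {1..n}"
    by (auto simp: meet_idx_def)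
  then have "(of_nat (card (meet_idx n xs J)) :: ennreal) \<le> of_nat n"
    using card_mono[OF _ K] by simp
  moreover have "Max ((\<lambda>j. f (part_iv xs j)) ` meet_idx n xs J) \<le> max_sf f n xs"
    unfolding max_sf_def using False K by (intro Max_mono) auto
  ultimately show ?thesis
    by (intro mult_mono) auto
qed simp

section \<open>Convergence of the step functions to the density\<close>

definition RN_point :: "ereal \<Rightarrow> ereal \<Rightarrow> (real set \<Rightarrow> ennreal) \<Rightarrow> (real \<Rightarrow> real) \<Rightarrow> real \<Rightarrow> bool" where
  "RN_point a b f s x \<longleftrightarrow> s x > 0 \<and>
     (\<forall>eps>0. \<exists>del>0. \<forall>u v. a < ereal u \<and> ereal v < b \<and> u < x \<and> x < v \<and> v - u < del \<longrightarrow>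
        f {u<..<v} \<noteq> top \<and> \<bar>enn2real (f {u<..<v}) / (v - u) - s x\<bar> < eps)"

locale increasing_RN_sf =
  fixes a b :: ereal and f :: "real set \<Rightarrow> ennreal" and s :: "real \<Rightarrow> real"
  assumes a_less_b: "a < b"
    and increasing: "increasing_sf a b f"
    and RN: "RN_sf a b f s"
begin

lemma s_integrable: "set_integrable lborel (oi a b) s"
  using RN by (simp add: RN_sf_def)

abbreviation s_integral :: real where
  "s_integral \<equiv> set_lebesgue_integral lborel (oi a b) s"

lemma s_integral_nonneg: "0 \<le> s_integral"
  unfolding set_lebesgue_integral_def using RN unfolding RN_sf_def
  by (intro integral_nonneg_AE) (auto elim!: eventually_mono split: split_indicator)

lemma AE_RN_point: "AE x in lborel. x \<in> oi a b \<longrightarrow> RN_point a b f s x"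
  using RN unfolding RN_sf_def RN_point_def by (auto elim!: eventually_elim2)

lemma exists_RN_point:
  assumes "u < v" "{u<..<v} \<subseteq> oi a b"
  obtains x where "x \<in> {u<..<v}" "RN_point a b f s x"
proof -
  have "\<exists>x\<in>{u<..<v}. RN_point a b f s x"
  proof (rule ccontr)
    assume "\<not> ?thesis"
    then have "AE x in lborel. x \<notin> {u<..<v}"
      using AE_RN_point assms(2) by (auto elim!: eventually_mono)
    then have "{u<..<v} \<in> null_sets lborel"
      by (subst AE_iff_null_sets) auto
    then have "emeasure lborel {u<..<v} = 0"
      by auto
    then show False
      using assms(1) by simp
  qed
  then show ?thesis
    using that by blast
qed

lemma RN_point_symmetric:
  assumes "RN_point a b f s y" "y \<in> oi a b" "eps > 0"
  shows "\<forall>\<^sub>F h in at_right 0. f {y - h<..<y + h} \<noteq> top \<and>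
    \<bar>enn2real (f {y - h<..<y + h}) / (2 * h) - s y\<bar> < eps"
proof -
  obtain del where "del > 0" and del: "\<And>u v. a < ereal u \<Longrightarrow> ereal v < b \<Longrightarrow> u < y \<Longrightarrow> y < v \<Longrightarrow>
      v - u < del \<Longrightarrow> f {u<..<v} \<noteq> top \<and> \<bar>enn2real (f {u<..<v}) / (v - u) - s y\<bar> < eps"
    using assms(1,3) unfolding RN_point_def by blast
  have "\<forall>\<^sub>F h in at_right 0. h < del / 2"
    using \<open>del > 0\<close> unfolding eventually_at_right_field by (intro exI[of _ "del / 2"]) auto
  with eventually_oi_margin[OF assms(2)] eventually_at_right_less[of 0]
  show ?thesis
  proof eventually_elim
    case (elim h)
    then have "f {y - h<..<y + h} \<noteq> top \<and>
        \<bar>enn2real (f {y - h<..<y + h}) / ((y + h) - (y - h)) - s y\<bar> < eps"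
      by (intro del) auto
    moreover have "(y + h) - (y - h) = 2 * h"
      by simp
    ultimately show ?case
      by (simp only:) simp
  qed
qed

lemma sf_mono:
  "a \<le> x2 \<Longrightarrow> x2 \<le> x1 \<Longrightarrow> x1 \<le> y1 \<Longrightarrow> y1 \<le> y2 \<Longrightarrow> y2 \<le> b \<Longrightarrow> f (oi x1 y1) \<le> f (oi x2 y2)"
  using increasing unfolding increasing_sf_def by (metis oi_mono order_trans)

lemma sf_empty: "f {} = 0"
proof -
  obtain u v where uv: "a < ereal u" "u < v" "ereal v < b"
    using a_less_b by (metis ereal_dense2 ereal_less_eq(3) less_le_not_le)
  then have "{u<..<v} \<subseteq> oi a b"
    using oi_mono[of a "ereal u" "ereal v" b] by auto
  then obtain y where y: "y \<in> oi a b" "RN_point a b f s y"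
    using exists_RN_point[OF uv(2)] by blast
  have "\<forall>\<^sub>F h in at_right 0. f {} \<le> ennreal (2 * h * (s y + 1))"
    using RN_point_symmetric[OF y(2,1) zero_less_one] eventually_oi_margin[OF y(1)] eventually_at_right_less[of 0]
  proof eventually_elim
    case (elim h)
    then have "enn2real (f {y - h<..<y + h}) \<le> 2 * h * (s y + 1)"
      by (simp add: field_simps abs_less_iff)
    then have "f {y - h<..<y + h} \<le> ennreal (2 * h * (s y + 1))"
      using elim by (metis ennreal_enn2real_if ennreal_leI)
    moreover have "f (oi (ereal y) (ereal y)) \<le> f (oi (ereal (y - h)) (ereal (y + h)))"
      using elim by (intro sf_mono) auto
    then have "f {} \<le> f {y - h<..<y + h}"
      by simp
    ultimately show ?case
      by (rule order_trans[rotated])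
  qed
  moreover have "((\<lambda>h. ennreal (2 * h * (s y + 1))) \<longlongrightarrow> 0) (at_right 0)"
    by (intro tendsto_ennrealI[where x = 0, simplified] tendsto_eq_intros) (auto intro: tendsto_within_subset)
  ultimately have "f {} \<le> 0"
    by (intro tendsto_le[OF _ _ tendsto_const]) auto
  then show ?thesis
    by simp
qed

lemma sf_pos:
  assumes "u < v" "a \<le> ereal u" "ereal v \<le> b"
  shows "f {u<..<v} > 0"
proof -
  have sub: "{u<..<v} \<subseteq> oi a b"
    using assms oi_mono[of a "ereal u" "ereal v" b] by auto
  then obtain y where y: "y \<in> {u<..<v}" "RN_point a b f s y"
    using exists_RN_point[OF assms(1)] by blast
  have "s y > 0"
    using y(2) by (simp add: RN_point_def)
  have "y \<in> oi a b"
    using sub y(1) by auto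
  have "\<forall>\<^sub>F h in at_right 0. h < min (y - u) (v - y)"
    using y(1) unfolding eventually_at_right_field by (intro exI[of _ "min (y - u) (v - y)"]) auto
  with RN_point_symmetric[OF y(2) \<open>y \<in> oi a b\<close> half_gt_zero[OF \<open>s y > 0\<close>]] eventually_at_right_less[of 0]
  have "\<forall>\<^sub>F h in at_right 0. 0 < h \<and> h < min (y - u) (v - y) \<and>
      \<bar>enn2real (f {y - h<..<y + h}) / (2 * h) - s y\<bar> < s y / 2"
    by eventually_elim auto
  then have "\<exists>h. 0 < h \<and> h < min (y - u) (v - y) \<and>
      \<bar>enn2real (f {y - h<..<y + h}) / (2 * h) - s y\<bar> < s y / 2"
    by (rule eventually_happens'[OF trivial_limit_at_right_real])
  then obtain h where h: "0 < h" "h < min (y - u) (v - y)"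
    "\<bar>enn2real (f {y - h<..<y + h}) / (2 * h) - s y\<bar> < s y / 2"
    by blast
  then have "enn2real (f {y - h<..<y + h}) / (2 * h) > 0"
    by linarith
  then have "0 < f {y - h<..<y + h}"
    using h(1) by (simp add: zero_less_divide_iff enn2real_positive_iff)
  also have "\<dots> \<le> f {u<..<v}"
    using h assms sf_mono[of "ereal u" "ereal (y - h)" "ereal (y + h)" "ereal v"] by auto
  finally show ?thesis .
qed

lemma sf_cell_within:
  assumes "a \<le> U" "U < ereal x" "ereal x < V" "V \<le> b" "a \<le> ereal w" "w < x" "x < w'" "ereal w' \<le> b"
    and "f (oi U V) < min (f {w<..<x}) (f {x<..<w'})"
  shows "ereal w < U" "V < ereal w'"
proof -
  show "ereal w < U"
  proof (rule ccontr)
    assume "\<not> ereal w < U"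
    then have "f (oi (ereal w) (ereal x)) \<le> f (oi U V)"
      using assms by (intro sf_mono) auto
    then show False
      using assms(9) by (auto dest: order.strict_trans2)
  qed
  show "V < ereal w'"
  proof (rule ccontr)
    assume "\<not> V < ereal w'"
    then have "f (oi (ereal x) (ereal w')) \<le> f (oi U V)"
      using assms by (intro sf_mono) auto
    then show False
      using assms(9) by (auto dest: order.strict_trans2)
  qed
qed

lemma ratio_sum_at_small_cells:
  assumes part: "partition_n n a b xs" and x: "x \<in> oi a b" "\<forall>j. xs j \<noteq> ereal x"
    and h: "0 < h" "a \<le> ereal (x - h)" "ereal (x + h) \<le> b"
    and small: "\<forall>j\<in>{1..n}. f (part_iv xs j) < min (f {x - h<..<x}) (f {x<..<x + h})"
  obtains u v where "x - h < u" "u < x" "x < v" "v < x + h" "ratio_sum f n xs x = sf_ratio f {u<..<v}"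
proof -
  obtain j where j: "j \<in> {1..n}" "x \<in> part_iv xs j"
    using partition_n_cell[OF part x(1)] x(2) by blast
  define U V where "U = xs (j - 1)" and "V = xs j"
  have UV: "U < ereal x" "ereal x < V"
    using j(2) by (auto simp: part_iv_def oi_def U_def V_def)
  have bounds: "a \<le> U" "V \<le> b"
    using partition_n_bounds[OF part] j(1) by (auto simp: U_def V_def)
  have "f (oi U V) < min (f {x - h<..<x}) (f {x<..<x + h})"
    using small j(1) by (simp add: part_iv_def U_def V_def)
  then have "ereal (x - h) < U" "V < ereal (x + h)"
    using sf_cell_within[OF bounds(1) UV bounds(2), of "x - h" "x + h"] h by auto
  then obtain u v where uv: "U = ereal u" "V = ereal v" "x - h < u" "v < x + h"
    using UV by (cases U; cases V) auto
  moreover have "ratio_sum f n xs x = sf_ratio f {u<..<v}"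
    using ratio_sum_cell[OF part j] uv(1,2) unfolding U_def V_def part_iv_def by simp
  ultimately show ?thesis
    using UV that by simp
qed

lemma ratio_sum_tendsto_at_RN_point:
  assumes part: "\<forall>\<^sub>F k in sequentially. partition_n (n k) a b (xs k)"
    and small: "\<forall>\<^sub>F k in sequentially. \<forall>j\<in>{1..n k}. f (part_iv (xs k) j) \<le> m k"
    and m: "m \<longlonglongrightarrow> 0"
    and x: "x \<in> oi a b" "RN_point a b f s x" "\<forall>k j. xs k j \<noteq> ereal x"
  shows "(\<lambda>k. ratio_sum f (n k) (xs k) x) \<longlonglongrightarrow> ennreal (s x)"
proof (rule tendsto_ennreal_approx)
  fix eps :: real
  assume "eps > 0"
  then obtain del where "del > 0" and del: "\<And>u v. a < ereal u \<Longrightarrow> ereal v < b \<Longrightarrow> u < x \<Longrightarrow> x < v \<Longrightarrow>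
      v - u < del \<Longrightarrow> f {u<..<v} \<noteq> top \<and> \<bar>enn2real (f {u<..<v}) / (v - u) - s x\<bar> < eps"
    using x(2) unfolding RN_point_def by blast
  obtain h where h: "0 < h" "h < del / 2" "a < ereal (x - h)" "ereal (x + h) < b"
    using oi_margin[OF x(1), of "del / 2"] \<open>del > 0\<close> by auto
  have "a < ereal x" "ereal x < b"
    using x(1) by (auto simp: oi_def)
  then have "0 < min (f {x - h<..<x}) (f {x<..<x + h})"
    using h by (auto intro!: sf_pos)
  with m have "\<forall>\<^sub>F k in sequentially. m k < min (f {x - h<..<x}) (f {x<..<x + h})"
    by (rule order_tendstoD)
  with part small
  show "\<forall>\<^sub>F k in sequentially. ratio_sum f (n k) (xs k) x \<noteq> top \<and>
      \<bar>enn2real (ratio_sum f (n k) (xs k) x) - s x\<bar> < eps"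
  proof eventually_elim
    case (elim k)
    have "\<forall>j\<in>{1..n k}. f (part_iv (xs k) j) < min (f {x - h<..<x}) (f {x<..<x + h})"
      using elim(2,3) by (blast intro: le_less_trans)
    moreover have "\<forall>j. xs k j \<noteq> ereal x"
      using x(3) by simp
    ultimately obtain u v where uv: "x - h < u" "u < x" "x < v" "v < x + h"
      and "ratio_sum f (n k) (xs k) x = sf_ratio f {u<..<v}"
      using ratio_sum_at_small_cells[OF elim(1) x(1) _ h(1) less_imp_le[OF h(3)] less_imp_le[OF h(4)]]
      by blast
    moreover have "a < ereal u"
      using h(3) uv(1) by (simp add: less_le_trans)
    moreover have "ereal v < b"
      using h(4) uv(4) by (meson ereal_less_eq(3) le_less_trans less_imp_le)
    ultimately show ?case
      using del[of u v] h(2) by (simp add: enn2real_sf_ratio sf_ratio_neq_top)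
  qed
qed

lemma AE_ratio_sum_tendsto:
  assumes "\<forall>\<^sub>F k in sequentially. partition_n (n k) a b (xs k)"
    and "\<forall>\<^sub>F k in sequentially. \<forall>j\<in>{1..n k}. f (part_iv (xs k) j) \<le> m k"
    and "m \<longlonglongrightarrow> 0"
  shows "AE x in lborel. x \<in> oi a b \<longrightarrow> (\<lambda>k. ratio_sum f (n k) (xs k) x) \<longlonglongrightarrow> ennreal (s x)"
  using AE_RN_point AE_not_division_point[of xs]
  by eventually_elim (blast intro: ratio_sum_tendsto_at_RN_point[OF assms])

lemma set_integral_eq_nn_integral:
  assumes "J \<in> sets lborel" "J \<subseteq> oi a b"
  shows "ennreal (set_lebesgue_integral lborel J s) = (\<integral>\<^sup>+x. ennreal (s x) * indicator J x \<partial>lborel)"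
proof -
  have "integrable lborel (\<lambda>x. indicator J x *\<^sub>R s x)"
    using set_integrable_subset[OF s_integrable assms] unfolding set_integrable_def .
  moreover have "AE x in lborel. 0 \<le> indicator J x *\<^sub>R s x"
    using RN assms(2) unfolding RN_sf_def
    by (auto elim!: eventually_mono split: split_indicator)
  ultimately have "ennreal (set_lebesgue_integral lborel J s) = (\<integral>\<^sup>+x. ennreal (indicator J x *\<^sub>R s x) \<partial>lborel)"
    unfolding set_lebesgue_integral_def by (rule nn_integral_eq_integral[symmetric])
  also have "\<dots> = (\<integral>\<^sup>+x. ennreal (s x) * indicator J x \<partial>lborel)"
    by (intro nn_integral_cong) (simp split: split_indicator)
  finally show ?thesis .
qed

lemma liminf_meet_idx_ge:
  assumes part: "\<forall>\<^sub>F n in sequentially. partition_n n a b (P n)"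
    and max_sf_0: "(\<lambda>n. max_sf f n (P n)) \<longlonglongrightarrow> 0"
    and J: "J \<in> sets lborel" "J \<subseteq> oi a b"
  shows "ennreal (set_lebesgue_integral lborel J s) \<le>
    liminf (\<lambda>n. of_nat (card (meet_idx n (P n) J)) * Max ((\<lambda>j. f (part_iv (P n) j)) ` meet_idx n (P n) J))"
proof -
  have conv: "AE x in lborel. x \<in> oi a b \<longrightarrow> (\<lambda>n. ratio_sum f n (P n) x) \<longlonglongrightarrow> ennreal (s x)"
    by (rule AE_ratio_sum_tendsto[of "\<lambda>n. n" P "\<lambda>n. max_sf f n (P n)", OF part _ max_sf_0])
      (intro always_eventually allI ballI part_iv_le_max_sf)
  have "ennreal (set_lebesgue_integral lborel J s) = (\<integral>\<^sup>+x. ennreal (s x) * indicator J x \<partial>lborel)"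
    by (rule set_integral_eq_nn_integral[OF J])
  also have "\<dots> \<le> (\<integral>\<^sup>+x. liminf (\<lambda>n. ratio_sum f n (P n) x * indicator J x) \<partial>lborel)"
    using conv
  proof (intro nn_integral_mono_AE, eventually_elim)
    case (elim x)
    show ?case
    proof (cases "x \<in> J")
      case True
      then have "(\<lambda>n. ratio_sum f n (P n) x * indicator J x) \<longlonglongrightarrow> ennreal (s x)"
        using elim J(2) by auto
      then show ?thesis
        using True by (simp add: lim_imp_Liminf)
    qed simp
  qed
  also have "\<dots> \<le> liminf (\<lambda>n. \<integral>\<^sup>+x. ratio_sum f n (P n) x * indicator J x \<partial>lborel)"
    using J(1) by (intro nn_integral_liminf) auto
  also have "\<dots> \<le> liminf (\<lambda>n. of_nat (card (meet_idx n (P n) J)) *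
      Max ((\<lambda>j. f (part_iv (P n) j)) ` meet_idx n (P n) J))"
    by (intro Liminf_mono always_eventually allI nn_integral_ratio_sum_on_le J(1))
  finally show ?thesis .
qed

end

section \<open>Greedy partitions\<close>

locale continuous_increasing_RN_sf = increasing_RN_sf +
  assumes continuous: "continuous_sf a b f"
begin

lemma sf_right_end_nbhd:
  assumes "a \<le> x" "p \<in> {x..b}" "open B" "f (oi x p) \<in> B"
  shows "\<exists>U. open U \<and> p \<in> U \<and> (\<forall>z\<in>U \<inter> {x..b}. f (oi x z) \<in> B)"
proof -
  have "continuous_on {x..b} (\<lambda>y. (x, y))"
    by (intro continuous_intros)
  moreover have "(\<lambda>y. (x, y)) ` {x..b} \<subseteq> {(x, y). a \<le> x \<and> x \<le> y \<and> y \<le> b}"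
    using assms(1) by auto
  ultimately have "continuous_on {x..b} (\<lambda>y. f (oi x y))"
    using continuous_on_compose2[OF continuous[unfolded continuous_sf_def], of "{x..b}" "\<lambda>y. (x, y)"]
    by auto
  then obtain U where "open U" "U \<inter> {x..b} = (\<lambda>y. f (oi x y)) -` B \<inter> {x..b}"
    using assms(3) unfolding continuous_on_open_invariant by blast
  then show ?thesis
    using assms(2,4) by (intro exI[of _ U]) auto
qed

definition greedy_step :: "real \<Rightarrow> ereal \<Rightarrow> ereal" where
  "greedy_step t x = Sup {y. x \<le> y \<and> y \<le> b \<and> f (oi x y) \<le> ennreal t}"

lemma greedy_step_ge: "x \<le> b \<Longrightarrow> x \<le> greedy_step t x"
  unfolding greedy_step_def using sf_empty by (intro Sup_upper) (auto simp: oi_empty)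

lemma greedy_step_le: "greedy_step t x \<le> b"
  unfolding greedy_step_def by (intro Sup_least) auto

lemma sf_less_extends:
  assumes "a \<le> x" "x \<le> p" "p < b" "f (oi x p) < ennreal t"
  obtains y where "p < y" "y \<le> b" "f (oi x y) < ennreal t"
proof -
  have "p \<in> {x..b}"
    using assms by auto
  then obtain U where U: "open U" "p \<in> U" "\<forall>z\<in>U \<inter> {x..b}. f (oi x z) \<in> {..<ennreal t}"
    using sf_right_end_nbhd[OF assms(1), of p "{..<ennreal t}"] assms(4) by auto
  obtain q where q: "q > p" "{p..<q} \<subseteq> U"
    using open_right[OF U(1,2) assms(3)] by auto
  obtain y where y: "p < y" "y < min q b"
    using dense[of p "min q b"] q assms(3) by auto
  then have "y \<in> U \<inter> {x..b}"
    using q assms by auto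
  then have "f (oi x y) < ennreal t"
    using U(3) by blast
  then show ?thesis
    using y by (intro that) auto
qed

lemma sf_greedy_step_le:
  assumes "a \<le> x" "x \<le> b"
  shows "f (oi x (greedy_step t x)) \<le> ennreal t"
proof (rule ccontr)
  define p where "p = greedy_step t x"
  assume "\<not> ?thesis"
  then have gt: "f (oi x p) > ennreal t"
    by (simp add: p_def)
  have xp: "x \<le> p" "p \<le> b"
    using greedy_step_ge[OF assms(2)] greedy_step_le by (auto simp: p_def)
  have "x \<noteq> p"
    using gt sf_empty by (auto simp: oi_empty)
  with xp have "x < p"
    by auto
  obtain U where U: "open U" "p \<in> U" "\<forall>z\<in>U \<inter> {x..b}. f (oi x z) \<in> {ennreal t<..}"
    using sf_right_end_nbhd[OF assms(1), of p "{ennreal t<..}"] xp gt by auto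
  obtain q where q: "q < p" "{q<..p} \<subseteq> U"
    using open_left[OF U(1,2) \<open>x < p\<close>] by auto
  obtain y where y: "y \<in> {y. x \<le> y \<and> y \<le> b \<and> f (oi x y) \<le> ennreal t}" "max q x < y"
    using less_Sup_iff[of "max q x" "{y. x \<le> y \<and> y \<le> b \<and> f (oi x y) \<le> ennreal t}"] q \<open>x < p\<close>
    unfolding p_def greedy_step_def by auto
  have "y \<le> p"
    unfolding p_def greedy_step_def using y(1) by (rule Sup_upper)
  then have "y \<in> U \<inter> {x..b}"
    using y q by auto
  then have "ennreal t < f (oi x y)"
    using U(3) by blast
  then show False
    using y(1) by (auto dest: order.strict_trans2)
qed

lemma sf_greedy_step_eq:
  assumes "a \<le> x" "x \<le> b" "greedy_step t x < b"
  shows "f (oi x (greedy_step t x)) = ennreal t"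
proof (rule ccontr)
  assume "\<not> ?thesis"
  then have "f (oi x (greedy_step t x)) < ennreal t"
    using sf_greedy_step_le[OF assms(1,2), of t] by (simp add: order_less_le)
  then obtain y where y: "greedy_step t x < y" "y \<le> b" "f (oi x y) < ennreal t"
    using sf_less_extends[OF assms(1) greedy_step_ge[OF assms(2)] assms(3)] by blast
  have "x \<le> y"
    using greedy_step_ge[OF assms(2), of t] y(1) by auto
  then have "y \<le> greedy_step t x"
    unfolding greedy_step_def using y by (intro Sup_upper) auto
  then show False
    using y(1) by auto
qed

lemma greedy_step_gt:
  assumes "a \<le> x" "x < b" "t > 0"
  shows "x < greedy_step t x"
proof -
  have "f (oi x x) < ennreal t"
    using sf_empty assms by (simp add: oi_empty)
  then obtain y where y: "x < y" "y \<le> b" "f (oi x y) < ennreal t"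
    using sf_less_extends[OF assms(1) order.refl assms(2)] by blast
  have "y \<le> greedy_step t x"
    unfolding greedy_step_def using y by (intro Sup_upper) auto
  then show ?thesis
    using y(1) by auto
qed

definition greedy_pt :: "real \<Rightarrow> nat \<Rightarrow> ereal" where
  "greedy_pt t j = (greedy_step t ^^ j) a"

lemma greedy_pt_0 [simp]: "greedy_pt t 0 = a"
  and greedy_pt_Suc: "greedy_pt t (Suc j) = greedy_step t (greedy_pt t j)"
  by (simp_all add: greedy_pt_def)

lemma greedy_pt_bounds: "a \<le> greedy_pt t j \<and> greedy_pt t j \<le> b"
proof (induction j)
  case 0
  then show ?case
    using a_less_b by simp
next
  case (Suc j)
  then show ?case
    using greedy_step_ge[of "greedy_pt t j" t] greedy_step_le[of t "greedy_pt t j"]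
    by (auto simp: greedy_pt_Suc)
qed

lemma greedy_pt_le_Suc: "greedy_pt t j \<le> greedy_pt t (Suc j)"
  using greedy_step_ge[of "greedy_pt t j" t] greedy_pt_bounds by (auto simp: greedy_pt_Suc)

lemma greedy_pt_mono: "i \<le> j \<Longrightarrow> greedy_pt t i \<le> greedy_pt t j"
  by (rule lift_Suc_mono_le[of "greedy_pt t", OF greedy_pt_le_Suc])

text \<open>The first greedy cell is excluded since it is unbounded when a is infinite.\<close>
lemma greedy_cell:
  assumes t: "t > 0" and j: "2 \<le> j" "greedy_pt t j < b"
  obtains u v where "u < v" "greedy_pt t (j - 1) = ereal u" "greedy_pt t j = ereal v"
    "f {u<..<v} = ennreal t"
proof -
  have step: "greedy_pt t j = greedy_step t (greedy_pt t (j - 1))"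
    using j greedy_pt_Suc[of t "j - 1"] by auto
  have "a < greedy_pt t 1"
    using greedy_step_gt[of a t] a_less_b t by (simp add: greedy_pt_Suc[of t 0, simplified])
  also have "greedy_pt t 1 \<le> greedy_pt t (j - 1)"
    using j by (intro greedy_pt_mono) auto
  finally have lo: "a < greedy_pt t (j - 1)" .
  have "greedy_pt t (j - 1) < b"
    using greedy_pt_mono[of "j - 1" j t] j by auto
  then have lt: "greedy_pt t (j - 1) < greedy_pt t j"
    unfolding step using greedy_pt_bounds[of t "j - 1"] t by (intro greedy_step_gt) auto
  have "f (oi (greedy_pt t (j - 1)) (greedy_pt t j)) = ennreal t"
    using j greedy_pt_bounds[of t "j - 1"] unfolding step by (intro sf_greedy_step_eq) auto
  moreover obtain u where "greedy_pt t (j - 1) = ereal u"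
    using lo lt j by (cases "greedy_pt t (j - 1)") auto
  moreover obtain v where "greedy_pt t j = ereal v"
    using lt j by (cases "greedy_pt t j") auto
  ultimately show ?thesis
    using lt that by auto
qed

lemma greedy_pts_nn_integral_ge:
  assumes t: "t > 0" and M: "greedy_pt t M < b"
    and ys: "M \<le> n" "\<And>i. i \<le> M \<Longrightarrow> ys i = greedy_pt t i"
  shows "of_nat (M - 1) * ennreal t \<le> (\<integral>\<^sup>+x. ratio_sum f n ys x \<partial>lborel)"
proof -
  have "of_nat (card {2..M}) * ennreal t \<le> (\<integral>\<^sup>+x. ratio_sum f n ys x \<partial>lborel)"
  proof (rule nn_integral_ratio_sum_ge)
    show "{2..M} \<subseteq> {1..n}"
      using ys by auto
    fix j
    assume j: "j \<in> {2..M}"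
    then have "greedy_pt t j < b"
      using greedy_pt_mono[of j M t] M by auto
    then obtain u v where "u < v" "greedy_pt t (j - 1) = ereal u" "greedy_pt t j = ereal v"
      "f {u<..<v} = ennreal t"
      using greedy_cell[OF t] j by auto
    moreover have "part_iv ys j = oi (greedy_pt t (j - 1)) (greedy_pt t j)"
      using j ys by (auto simp: part_iv_def)
    ultimately show "\<exists>u v. u < v \<and> part_iv ys j = {u<..<v} \<and> f (part_iv ys j) = ennreal t"
      by auto
  qed
  then show ?thesis
    by simp
qed

end

locale dominated_RN_sf = continuous_increasing_RN_sf +
  fixes d :: "real \<Rightarrow> real"
  assumes d_integrable: "set_integrable lborel (oi a b) d"
    and ratio_sum_le_d: "\<And>n xs. partition_n n a b xs \<Longrightarrow>
      AE x in lborel. x \<in> oi a b \<longrightarrow> ratio_sum f n xs x \<le> ennreal (d x)"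
begin

lemma AE_ratio_sum_le_d_indicator:
  assumes "partition_n n a b xs"
  shows "AE x in lborel. ratio_sum f n xs x \<le> ennreal (d x) * indicator (oi a b) x"
  using ratio_sum_le_d[OF assms]
  by eventually_elim (auto simp: ratio_sum_outside[OF assms] split: split_indicator)

lemma greedy_pt_reaches_b:
  assumes t: "t > 0"
  shows "\<exists>N. greedy_pt t N = b"
proof (rule ccontr)
  assume "\<not> ?thesis"
  then have below_b: "greedy_pt t M < b" for M
    using greedy_pt_bounds[of t M] by (auto simp: order.order_iff_strict)
  define D where "D = enn2real (\<integral>\<^sup>+x. ennreal (d x) * indicator (oi a b) x \<partial>lborel)"
  have D: "(\<integral>\<^sup>+x. ennreal (d x) * indicator (oi a b) x \<partial>lborel) = ennreal D"
    using set_integrable_ennreal_indicator(2)[OF d_integrable] by (simp add: D_def)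
  define M where "M = nat \<lceil>D / t\<rceil> + 2"
  define ys where "ys i = (if i \<le> M then greedy_pt t i else b)" for i
  have ys: "partition_n (Suc M) a b ys"
    unfolding partition_n_def ys_def using greedy_pt_bounds greedy_pt_le_Suc by auto
  have "ennreal (real (M - 1) * t) = of_nat (M - 1) * ennreal t"
    using t by (simp add: ennreal_mult ennreal_of_nat_eq_real_of_nat)
  also have "\<dots> \<le> (\<integral>\<^sup>+x. ratio_sum f (Suc M) ys x \<partial>lborel)"
    using below_b[of M] by (intro greedy_pts_nn_integral_ge[OF t]) (auto simp: ys_def)
  also have "\<dots> \<le> ennreal D"
    unfolding D[symmetric] by (intro nn_integral_mono_AE AE_ratio_sum_le_d_indicator[OF ys])
  finally have "real (M - 1) * t \<le> D"
    by (simp add: ennreal_le_iff D_def)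
  moreover have "D / t < real (M - 1)"
    unfolding M_def by linarith
  ultimately show False
    using t by (simp add: field_simps)
qed

definition greedy_count :: "real \<Rightarrow> nat" where
  "greedy_count t = (LEAST N. greedy_pt t N = b)"

lemma greedy_pt_greedy_count: "t > 0 \<Longrightarrow> greedy_pt t (greedy_count t) = b"
  unfolding greedy_count_def using greedy_pt_reaches_b by (rule LeastI_ex)

lemma greedy_count_ge_1: "t > 0 \<Longrightarrow> greedy_count t \<ge> 1"
  using greedy_pt_greedy_count[of t] a_less_b by (cases "greedy_count t") auto

lemma greedy_pt_less_b:
  assumes "i < greedy_count t"
  shows "greedy_pt t i < b"
proof -
  have "greedy_pt t i \<noteq> b"
    using assms unfolding greedy_count_def by (rule not_less_Least)
  then show ?thesis
    using greedy_pt_bounds[of t i] by auto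
qed

definition greedy_partition :: "real \<Rightarrow> nat \<Rightarrow> ereal" where
  "greedy_partition t j = greedy_pt t (min j (greedy_count t))"

lemma partition_n_greedy_partition:
  "t > 0 \<Longrightarrow> greedy_count t \<le> n \<Longrightarrow> partition_n n a b (greedy_partition t)"
  unfolding partition_n_def greedy_partition_def using greedy_pt_greedy_count greedy_pt_bounds
  by (auto simp: min_def greedy_pt_le_Suc)

lemma sf_greedy_partition_le:
  assumes "j \<ge> 1"
  shows "f (part_iv (greedy_partition t) j) \<le> ennreal t"
proof (cases "j \<le> greedy_count t")
  case True
  then have "part_iv (greedy_partition t) j = oi (greedy_pt t (j - 1)) (greedy_step t (greedy_pt t (j - 1)))"
    using assms greedy_pt_Suc[of t "j - 1"] by (auto simp: part_iv_def greedy_partition_def)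
  then show ?thesis
    using sf_greedy_step_le greedy_pt_bounds by auto
next
  case False
  then have "part_iv (greedy_partition t) j = {}"
    by (auto simp: part_iv_def greedy_partition_def oi_empty)
  then show ?thesis
    using sf_empty by simp
qed

lemma greedy_count_le_nn_integral:
  assumes t: "t > 0"
  shows "ennreal (real (greedy_count t) * t) \<le>
    ennreal (2 * t) + (\<integral>\<^sup>+x. ratio_sum f (greedy_count t) (greedy_partition t) x \<partial>lborel)"
proof -
  define M where "M = greedy_count t - 1"
  have N: "greedy_count t = Suc M"
    using greedy_count_ge_1[OF t] by (simp add: M_def)
  have "real (greedy_count t) \<le> 2 + real (M - 1)"
    using N by (cases M) auto
  then have "real (greedy_count t) * t \<le> (2 + real (M - 1)) * t"
    using t by (intro mult_right_mono) auto
  then have "ennreal (real (greedy_count t) * t) \<le> ennreal (2 * t + real (M - 1) * t)"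
    by (intro ennreal_leI) (simp add: distrib_right)
  also have "\<dots> = ennreal (2 * t) + of_nat (M - 1) * ennreal t"
    using t by (simp add: ennreal_plus ennreal_mult ennreal_of_nat_eq_real_of_nat)
  also have "of_nat (M - 1) * ennreal t \<le> (\<integral>\<^sup>+x. ratio_sum f (greedy_count t) (greedy_partition t) x \<partial>lborel)"
    using greedy_pt_less_b[of M t] N
    by (intro greedy_pts_nn_integral_ge[OF t]) (auto simp: greedy_partition_def)
  finally show ?thesis
    by (simp add: add_left_mono)
qed

section \<open>Asymptotics of optimal partitions\<close>

lemma greedy_integral_tendsto:
  assumes tk: "\<And>k. tk k > 0" "tk \<longlonglongrightarrow> 0"
  shows "(\<lambda>k. \<integral>\<^sup>+x. ratio_sum f (greedy_count (tk k)) (greedy_partition (tk k)) x \<partial>lborel)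
    \<longlonglongrightarrow> ennreal s_integral"
proof -
  have part: "partition_n (greedy_count (tk k)) a b (greedy_partition (tk k))" for k
    using tk(1) by (intro partition_n_greedy_partition) auto
  have conv: "AE x in lborel. x \<in> oi a b \<longrightarrow>
      (\<lambda>k. ratio_sum f (greedy_count (tk k)) (greedy_partition (tk k)) x) \<longlonglongrightarrow> ennreal (s x)"
  proof (rule AE_ratio_sum_tendsto[where m = "\<lambda>k. ennreal (tk k)"])
    show "\<forall>\<^sub>F k in sequentially. partition_n (greedy_count (tk k)) a b (greedy_partition (tk k))"
      using part by simp
    show "\<forall>\<^sub>F k in sequentially. \<forall>j\<in>{1..greedy_count (tk k)}.
        f (part_iv (greedy_partition (tk k)) j) \<le> ennreal (tk k)"
      by (intro always_eventually allI ballI sf_greedy_partition_le) simp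
    show "(\<lambda>k. ennreal (tk k)) \<longlonglongrightarrow> 0"
      using tendsto_ennrealI[OF tk(2)] by simp
  qed
  have "(\<lambda>k. \<integral>\<^sup>+x. ratio_sum f (greedy_count (tk k)) (greedy_partition (tk k)) x \<partial>lborel)
      \<longlonglongrightarrow> (\<integral>\<^sup>+x. ennreal (s x) * indicator (oi a b) x \<partial>lborel)"
  proof (rule nn_integral_dominated_convergence[where w = "\<lambda>x. ennreal (d x) * indicator (oi a b) x"])
    show "(\<lambda>x. ennreal (s x) * indicator (oi a b) x) \<in> borel_measurable lborel"
      by (rule set_integrable_ennreal_indicator(1)[OF s_integrable])
    show "(\<lambda>x. ennreal (d x) * indicator (oi a b) x) \<in> borel_measurable lborel"
      by (rule set_integrable_ennreal_indicator(1)[OF d_integrable])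
    show "(\<integral>\<^sup>+x. ennreal (d x) * indicator (oi a b) x \<partial>lborel) < \<infinity>"
      by (rule set_integrable_ennreal_indicator(2)[OF d_integrable])
    show "AE x in lborel. ratio_sum f (greedy_count (tk k)) (greedy_partition (tk k)) x \<le>
        ennreal (d x) * indicator (oi a b) x" for k
      by (rule AE_ratio_sum_le_d_indicator[OF part])
    show "AE x in lborel. (\<lambda>k. ratio_sum f (greedy_count (tk k)) (greedy_partition (tk k)) x)
        \<longlonglongrightarrow> ennreal (s x) * indicator (oi a b) x"
      using conv by eventually_elim (auto simp: ratio_sum_outside[OF part] split: split_indicator)
  qed simp
  then show ?thesis
    using set_integral_eq_nn_integral[OF oi_in_sets_lborel order.refl] by simp
qed

lemma eventually_greedy_count_le:
  assumes e: "e > 0"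
  shows "\<forall>\<^sub>F t in at_right 0. real (greedy_count t) * t < s_integral + e"
proof (rule sequentially_imp_eventually_within, safe)
  fix tk :: "nat \<Rightarrow> real"
  assume "\<forall>k. tk k \<in> {0<..} \<and> tk k \<noteq> 0" and tk: "tk \<longlonglongrightarrow> 0"
  then have pos: "tk k > 0" for k
    by auto
  have "ennreal s_integral < ennreal (s_integral + e / 2)"
    using e s_integral_nonneg by (simp add: ennreal_less_iff)
  with greedy_integral_tendsto[OF pos tk]
  have "\<forall>\<^sub>F k in sequentially. (\<integral>\<^sup>+x. ratio_sum f (greedy_count (tk k)) (greedy_partition (tk k)) x \<partial>lborel)
      < ennreal (s_integral + e / 2)"
    by (rule order_tendstoD)
  moreover have "(\<lambda>k. 2 * tk k) \<longlonglongrightarrow> 0"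
    using tendsto_mult_right_zero[OF tk] by simp
  then have "\<forall>\<^sub>F k in sequentially. 2 * tk k < e / 2"
    by (rule order_tendstoD(2)) (use e in simp)
  ultimately show "\<forall>\<^sub>F k in sequentially. real (greedy_count (tk k)) * tk k < s_integral + e"
  proof eventually_elim
    case (elim k)
    have "ennreal (real (greedy_count (tk k)) * tk k) \<le> ennreal (2 * tk k) +
        (\<integral>\<^sup>+x. ratio_sum f (greedy_count (tk k)) (greedy_partition (tk k)) x \<partial>lborel)"
      by (rule greedy_count_le_nn_integral[OF pos])
    also have "\<dots> < ennreal (e / 2 + (s_integral + e / 2))"
      using elim e by (intro add_mono_ennreal ennreal_lessI) auto
    finally show ?case
      using pos[of k] by (simp add: ennreal_less_iff)
  qed
qed

lemma eventually_optimal_max_sf_le: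
  assumes opt: "\<And>n. n \<ge> 1 \<Longrightarrow> optimal_partition a b f n (P n)" and e: "e > 0"
  shows "\<forall>\<^sub>F n in sequentially. max_sf f n (P n) \<le> ennreal ((s_integral + e) / real n)"
proof -
  obtain t0 where "t0 > 0" and count: "\<And>t. 0 < t \<Longrightarrow> t < t0 \<Longrightarrow> real (greedy_count t) * t < s_integral + e"
    using eventually_greedy_count_le[OF e] unfolding eventually_at_right_field by blast
  have "\<forall>\<^sub>F n in sequentially. (s_integral + e) / t0 < real n"
    using eventually_gt_at_top[of "nat \<lceil>(s_integral + e) / t0\<rceil>"] by eventually_elim linarith
  then show ?thesis
  proof eventually_elim
    case (elim n)
    define t where "t = (s_integral + e) / real n"
    have "0 < (s_integral + e) / t0"
      using s_integral_nonneg e \<open>t0 > 0\<close> by simp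
    then have n: "n \<ge> 1"
      using elim by simp
    have t: "0 < t" "t < t0"
      using s_integral_nonneg e elim \<open>t0 > 0\<close> n by (auto simp: t_def field_simps)
    have "real (greedy_count t) * t < real n * t"
      using count[OF t] n by (simp add: t_def)
    then have "greedy_count t \<le> n"
      using t(1) by simp
    then have "max_sf f n (P n) \<le> max_sf f n (greedy_partition t)"
      using opt[OF n] partition_n_greedy_partition[OF t(1)] by (simp add: optimal_partition_def)
    also have "\<dots> \<le> ennreal t"
      using n by (intro max_sf_le sf_greedy_partition_le) auto
    finally show ?case
      by (simp add: t_def)
  qed
qed

lemma optimal_max_sf_tendsto_0:
  assumes opt: "\<And>n. n \<ge> 1 \<Longrightarrow> optimal_partition a b f n (P n)"
  shows "(\<lambda>n. max_sf f n (P n)) \<longlonglongrightarrow> 0"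
proof (rule tendsto_sandwich[where f = "\<lambda>_. 0", OF _ eventually_optimal_max_sf_le[of P, OF opt zero_less_one]])
  have "(\<lambda>n. (s_integral + 1) / real n) \<longlonglongrightarrow> 0"
    by (rule lim_const_over_n)
  then show "(\<lambda>n. ennreal ((s_integral + 1) / real n)) \<longlonglongrightarrow> 0"
    using tendsto_ennrealI by fastforce
qed auto

lemma limsup_scaled_optimal_max_sf_le:
  assumes opt: "\<And>n. n \<ge> 1 \<Longrightarrow> optimal_partition a b f n (P n)"
  shows "limsup (\<lambda>n. of_nat n * max_sf f n (P n)) \<le> ennreal s_integral"
proof (rule ennreal_le_epsilon)
  fix e :: real
  assume "0 < e"
  have "\<forall>\<^sub>F n in sequentially. 0 < n \<and> max_sf f n (P n) \<le> ennreal ((s_integral + e) / real n)"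
    using eventually_optimal_max_sf_le[OF opt \<open>0 < e\<close>] by (intro eventually_conj) auto
  then have "\<forall>\<^sub>F n in sequentially. of_nat n * max_sf f n (P n) \<le> ennreal (s_integral + e)"
  proof (rule eventually_mono)
    fix n :: nat
    assume n: "0 < n \<and> max_sf f n (P n) \<le> ennreal ((s_integral + e) / real n)"
    then have "of_nat n * max_sf f n (P n) \<le> of_nat n * ennreal ((s_integral + e) / real n)"
      by (intro mult_left_mono) auto
    also have "\<dots> = ennreal (s_integral + e)"
      using n s_integral_nonneg \<open>0 < e\<close>
      by (simp add: ennreal_of_nat_eq_real_of_nat ennreal_mult[symmetric])
    finally show "of_nat n * max_sf f n (P n) \<le> ennreal (s_integral + e)" .
  qed
  then have "limsup (\<lambda>n. of_nat n * max_sf f n (P n)) \<le> ennreal (s_integral + e)"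
    by (rule Limsup_bounded)
  then show "limsup (\<lambda>n. of_nat n * max_sf f n (P n)) \<le> ennreal s_integral + ennreal e"
    using s_integral_nonneg \<open>0 < e\<close> by (simp add: ennreal_plus)
qed

end

theorem lemma3p8:
  fixes a b c d :: ereal and f :: "real set \<Rightarrow> ennreal" and s :: "real \<Rightarrow> real"
    and P :: "nat \<Rightarrow> nat \<Rightarrow> ereal"
  assumes "a < b"
    and "continuous_sf a b f" and "increasing_sf a b f"
    and "RN_sf a b f s" and "dominated_sf a b f"
    and "a \<le> c" and "c < d" and "d \<le> b"
    and "\<And>n. n \<ge> 1 \<Longrightarrow> optimal_partition a b f n (P n)"
  shows "(liminf (\<lambda>n. of_nat (card (meet_idx n (P n) (oi c d))) *
             Max ((\<lambda>j. f (part_iv (P n) j)) ` meet_idx n (P n) (oi c d)))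
           \<ge> ennreal (set_lebesgue_integral lborel (oi c d) s)) \<and>
         ((\<lambda>n. of_nat n * max_sf f n (P n))
           \<longlonglongrightarrow> ennreal (set_lebesgue_integral lborel (oi a b) s))"
proof -
  obtain w where "set_integrable lborel (oi a b) w"
    "\<And>n xs. partition_n n a b xs \<Longrightarrow> AE x in lborel. x \<in> oi a b \<longrightarrow> ratio_sum f n xs x \<le> ennreal (w x)"
    using assms(5) unfolding dominated_sf_def ratio_sum_def by blast
  then interpret dominated_RN_sf a b f s w
    using assms(1-4) by unfold_locales auto
  have part: "\<forall>\<^sub>F n in sequentially. partition_n n a b (P n)"
    using eventually_ge_at_top[of 1] by eventually_elim (use assms(9) in \<open>simp add: optimal_partition_def\<close>)
  note max_sf_0 = optimal_max_sf_tendsto_0[OF assms(9)]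
  have "ennreal s_integral \<le> liminf (\<lambda>n. of_nat (card (meet_idx n (P n) (oi a b))) *
      Max ((\<lambda>j. f (part_iv (P n) j)) ` meet_idx n (P n) (oi a b)))"
    by (rule liminf_meet_idx_ge[OF part max_sf_0 oi_in_sets_lborel order.refl])
  also have "\<dots> \<le> liminf (\<lambda>n. of_nat n * max_sf f n (P n))"
    by (intro Liminf_mono always_eventually allI card_meet_idx_mult_Max_le)
  finally have "(\<lambda>n. of_nat n * max_sf f n (P n)) \<longlonglongrightarrow> ennreal s_integral"
    using limsup_scaled_optimal_max_sf_le[OF assms(9)] by (intro Limsup_le_Liminf_imp_tendsto) auto
  moreover have "oi c d \<subseteq> oi a b"
    using assms(6,8) by (rule oi_mono)
  ultimately show ?thesis
    using liminf_meet_idx_ge[OF part max_sf_0 oi_in_sets_lborel] by simp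
qed

end
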